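(* Let $y\in\mathbb R^n$, $Z\in\mathbb R^{n\times m}$ and $A\in\mathbb R^{r\times m}$, and for $\theta\in\mathbb R^m$ write $|\theta|=\sum_{l}|\theta_l|$ for the $L_1$-norm. For $\gamma\ge0$ and $\lambda\ge0$ let $\hat\theta_{\gamma,\lambda}$ be a minimizer of $$(y-Z\theta)^T(y-Z\theta)+\gamma(A\theta)^TA\theta+\lambda|\theta|$$ over $\theta\in\mathbb R^m$ (assumed to exist). Let $\hat\theta^{(LS)}$ be a minimizer of $(y-Z\theta)^T(y-Z\theta)$ over all $\theta\in\mathbb R^m$ which additionally satisfies $A\hat\theta^{(LS)}=0$ (assumed to exist). Define $\Delta_{\gamma,\lambda}=(A\hat\theta_{\gamma,\lambda})^TA\hat\theta_{\gamma,\lambda}$. Then for every $\gamma>0$ and $\lambda\ge0$, $$\Delta_{\gamma,\lambda}\le\frac{\lambda\bigl(|\hat\theta^{(LS)}|-|\hat\theta_{0,\lambda}|\bigr)}{\gamma}.$$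
   Context: In the paper's application, $\theta=(\theta_{10},\theta_{20},\dots,\theta_{k,k-1})^T$ collects the pairwise differences $\theta_{ij}=\beta_i-\beta_j$ ($0\le j<i\le k$) of dummy coefficients of a nominal predictor, $A\theta=0$ encodes the restrictions $\theta_{ij}=\theta_{i0}-\theta_{j0}$ for all $i>j>0$, and $Z=(X\,|\,0)$ so that $Z\theta=X\beta$; the statement, however, holds for arbitrary $y,Z,A$ as stated. *)

theory Defs
  imports "HOL-Analysis.Analysis"
begin

definition l1norm :: "real ^ 'm \<Rightarrow> real" where
  "l1norm \<theta> = (\<Sum>l\<in>UNIV. \<bar>\<theta> $ l\<bar>)"

definition rss :: "real ^ 'n \<Rightarrow> real ^ 'm ^ 'n \<Rightarrow> real ^ 'm \<Rightarrow> real" where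
  "rss y Z \<theta> = (y - Z *v \<theta>) \<bullet> (y - Z *v \<theta>)"

definition pen_obj :: "real ^ 'n \<Rightarrow> real ^ 'm ^ 'n \<Rightarrow> real ^ 'm ^ 'r \<Rightarrow> real \<Rightarrow> real \<Rightarrow> real ^ 'm \<Rightarrow> real" where
  "pen_obj y Z A gam lam \<theta> = rss y Z \<theta> + gam * ((A *v \<theta>) \<bullet> (A *v \<theta>)) + lam * l1norm \<theta>"

end

theory Submission
  imports Defs
begin

(*
  Write f for the residual sum of squares, P(theta) = (A theta)^T (A theta)
  for the constraint penalty and L for the L1-norm.  Comparing the three minimizers
  pairwise gives three inequalities:
    f(theta_g) + gam P(theta_g) + lam L(theta_g) <= f(theta_LS) + lam L(theta_LS)
        (theta_g is penalized-optimal, and P(theta_LS) = 0),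
    f(theta_0) + lam L(theta_0) <= f(theta_g) + lam L(theta_g)
        (theta_0 is optimal for gam = 0),
    f(theta_LS) <= f(theta_0)          (theta_LS is least squares optimal).
  Adding them cancels every f-term and all L-terms involving theta_g, leaving
  gam P(theta_g) <= lam (L(theta_LS) - L(theta_0)).
*)

lemma penalty_bound_from_minimizers:
  fixes fit pen reg :: "'a \<Rightarrow> real" and gam lam :: real
  assumes opt_g: "fit xg + gam * pen xg + lam * reg xg \<le> fit xLS + gam * pen xLS + lam * reg xLS"
    and opt_0: "fit x0 + lam * reg x0 \<le> fit xg + lam * reg xg"
    and opt_LS: "fit xLS \<le> fit x0"
    and constr: "pen xLS = 0"
  shows "gam * pen xg \<le> lam * (reg xLS - reg x0)"
  using opt_g opt_0 opt_LS constr by (simp add: algebra_simps)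

theorem proposition4:
  fixes y :: "real ^ 'n" and Z :: "real ^ 'm ^ 'n" and A :: "real ^ 'm ^ 'r"
    and gam lam :: real
    and \<theta>g \<theta>0 \<theta>LS :: "real ^ 'm"
  assumes "gam > 0" and "lam \<ge> 0"
    and min_g: "\<forall>\<theta>. pen_obj y Z A gam lam \<theta>g \<le> pen_obj y Z A gam lam \<theta>"
    and min_0: "\<forall>\<theta>. pen_obj y Z A 0 lam \<theta>0 \<le> pen_obj y Z A 0 lam \<theta>"
    and min_LS: "\<forall>\<theta>. rss y Z \<theta>LS \<le> rss y Z \<theta>"
    and LS_constr: "A *v \<theta>LS = 0"
  shows "(A *v \<theta>g) \<bullet> (A *v \<theta>g) \<le> lam * (l1norm \<theta>LS - l1norm \<theta>0) / gam"
proof -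
  define pen where "pen \<theta> = (A *v \<theta>) \<bullet> (A *v \<theta>)" for \<theta>
  have "gam * pen \<theta>g \<le> lam * (l1norm \<theta>LS - l1norm \<theta>0)"
  proof (rule penalty_bound_from_minimizers[where fit = "rss y Z"])
    show "rss y Z \<theta>g + gam * pen \<theta>g + lam * l1norm \<theta>g
        \<le> rss y Z \<theta>LS + gam * pen \<theta>LS + lam * l1norm \<theta>LS"
      using min_g by (simp add: pen_obj_def pen_def)
    show "rss y Z \<theta>0 + lam * l1norm \<theta>0 \<le> rss y Z \<theta>g + lam * l1norm \<theta>g"
      using min_0 by (simp add: pen_obj_def)
    show "rss y Z \<theta>LS \<le> rss y Z \<theta>0"
      using min_LS by blast
    show "pen \<theta>LS = 0"
      using LS_constr by (simp add: pen_def)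
  qed
  then show ?thesis
    using \<open>gam > 0\<close> by (simp add: pen_def pos_le_divide_eq mult.commute)
qed

end
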